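(* Work in Minkowski space $\mathbb{R}^{3,1}$ with metric $\eta=\operatorname{diag}(-1,1,1,1)$, indices lowered with $\eta$. For a nonzero 4-vector $k$, let $S_k$ be the set of symmetric tensors $$T_{\mu\nu}=u_\mu u_\nu+(u^\lambda u_\lambda)\,d_\mu d_\nu$$ where $u=(1,\vec v)$ with $|\vec v|\le1$, $d=(0,\hat d)$ with $|\hat d|=1$ and $\hat d\cdot\vec v=0$, and $u^\mu k_\mu=d^\mu k_\mu=0$. Then: (i) every $T\in S_k$ satisfies $k^\mu T_{\mu\nu}=0$; (ii) if $k$ is timelike, $S_k=\emptyset$; (iii) if $k$ is spacelike, the real linear span of $S_k$ equals the space of all symmetric tensors $T_{\mu\nu}$ with $k^\mu T_{\mu\nu}=0$; (iv) if $k$ is null, the real linear span of $S_k$ is the one-dimensional space $\mathbb{R}\,k_\mu k_\nu$; in particular for every null $l$, $l^\mu T_{\mu\nu}$ is non-spacelike for every $T$ in this span. *)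

theory Defs
  imports "HOL-Analysis.Analysis" "HOL-Library.Numeral_Type"
begin

text \<open>Minkowski space R^{3,1}: 4-vectors are real^4, index 0 is time,
  indices 1,2,3 are spatial. Vectors are given by upper-index components.
  Tensors T_{mu nu} (lower indices) are real^4^4 with T $ mu $ nu.\<close>

definition eta :: "4 \<Rightarrow> real" where
  "eta i = (if i = 0 then -1 else 1)"

definition lower :: "real^4 \<Rightarrow> real^4" where
  "lower u = (\<chi> i. eta i * u $ i)"

definition raise :: "real^4 \<Rightarrow> real^4" where
  "raise w = (\<chi> i. eta i * w $ i)"

definition mdot :: "real^4 \<Rightarrow> real^4 \<Rightarrow> real" where
  "mdot u w = (\<Sum>i\<in>UNIV. u $ i * (lower w) $ i)"

definition timelike :: "real^4 \<Rightarrow> bool" where "timelike k \<longleftrightarrow> mdot k k < 0"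
definition spacelike :: "real^4 \<Rightarrow> bool" where "spacelike k \<longleftrightarrow> mdot k k > 0"
definition null :: "real^4 \<Rightarrow> bool" where "null k \<longleftrightarrow> mdot k k = 0"

definition spatial_dot :: "real^4 \<Rightarrow> real^4 \<Rightarrow> real" where
  "spatial_dot a b = (\<Sum>i\<in>{1,2,3::4}. a $ i * b $ i)"

text \<open>Contraction k^mu T_{mu nu} (result has a lower index nu).\<close>
definition contr :: "real^4 \<Rightarrow> real^4^4 \<Rightarrow> real^4" where
  "contr k T = (\<chi> nu. \<Sum>mu\<in>UNIV. k $ mu * T $ mu $ nu)"

definition symmetric_tensor :: "real^4^4 \<Rightarrow> bool" where
  "symmetric_tensor T \<longleftrightarrow> (\<forall>mu nu. T $ mu $ nu = T $ nu $ mu)"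

definition Tud :: "real^4 \<Rightarrow> real^4 \<Rightarrow> real^4^4" where
  "Tud u d = (\<chi> mu nu. (lower u) $ mu * (lower u) $ nu
                       + mdot u u * (lower d) $ mu * (lower d) $ nu)"

definition S :: "real^4 \<Rightarrow> (real^4^4) set" where
  "S k = {T. \<exists>u d. u $ 0 = 1 \<and> spatial_dot u u \<le> 1
              \<and> d $ 0 = 0 \<and> spatial_dot d d = 1 \<and> spatial_dot d u = 0
              \<and> mdot u k = 0 \<and> mdot d k = 0 \<and> T = Tud u d}"

end

theory Submission
  imports Defs
begin

(*
  (i)   Contracting T = u u + (u.u) d d with k gives (u.k) u + (u.u)(d.k) d = 0.
  (ii)  For u = (1, v) with |v| <= 1 and u.k = 0 one has the identity
          k.k = |k0 v - k_spatial|^2 + k0^2 (1 - |v|^2),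
        so k cannot be timelike, and if k is null then k = k0 u.  In the null case
        u is therefore null and proportional to k, so every T in S k is a fixed
        multiple of k k; this gives (iv), and contracting k k with a null l yields a
        multiple of k, which is null.
  (iii) For spacelike k the tensors in S k are symmetric and annihilated by k, so
        their span lies in that space.  For the reverse inclusion a
        spatial Householder reflection moves k to the canonical form (k0,0,0,c) with
        |k0| < c; reflections preserve every ingredient of the problem, so it
        suffices to treat the canonical vector, where six explicit members of S k
        span all symmetric tensors annihilated by k.
*)

lemma sum_UNIV_4: "sum f (UNIV::4 set) = f 0 + f 1 + f 2 + f 3"
proof -
  have four: "(4::4) = 0" by simp
  show ?thesis using sum_4[of f] unfolding four by (simp add: ac_simps)
qed

lemma all_4: "(\<forall>i::4. P i) \<longleftrightarrow> P 0 \<and> P 1 \<and> P 2 \<and> P 3"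
proof -
  have four: "(4::4) = 0" by simp
  show ?thesis using forall_4[of P] unfolding four by auto
qed

lemma mdot_coords: "mdot u w = - u$0*w$0 + u$1*w$1 + u$2*w$2 + u$3*w$3"
  by (simp add: mdot_def lower_def eta_def sum_UNIV_4)

lemma spatial_dot_coords: "spatial_dot a b = a$1*b$1 + a$2*b$2 + a$3*b$3"
  by (simp add: spatial_dot_def)

lemma lower_nth [simp]:
  "lower u $ 0 = - u$0" "lower u $ 1 = u$1" "lower u $ 2 = u$2" "lower u $ 3 = u$3"
  by (simp_all add: lower_def eta_def)

lemma raise_nth [simp]:
  "raise u $ 0 = - u$0" "raise u $ 1 = u$1" "raise u $ 2 = u$2" "raise u $ 3 = u$3"
  by (simp_all add: raise_def eta_def)

lemma contr_nth: "contr k T $ n = k$0 * T$0$n + k$1 * T$1$n + k$2 * T$2$n + k$3 * T$3$n"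
  by (simp add: contr_def sum_UNIV_4)

lemma vec4_eq_iff: "(x::real^4) = y \<longleftrightarrow> x$0 = y$0 \<and> x$1 = y$1 \<and> x$2 = y$2 \<and> x$3 = y$3"
  by (simp add: vec_eq_iff all_4)

lemma tensor_eq_iff:
  "(x::real^4^4) = y \<longleftrightarrow>
     (\<forall>j. x$0$j = y$0$j) \<and> (\<forall>j. x$1$j = y$1$j) \<and> (\<forall>j. x$2$j = y$2$j) \<and> (\<forall>j. x$3$j = y$3$j)"
  by (simp add: vec_eq_iff all_4)

lemma spatial_dot_self_nonneg: "0 \<le> spatial_dot x x"
  by (simp add: spatial_dot_coords)

lemma mdot_spatial_dot: "mdot x y = spatial_dot x y - x$0 * y$0"
  by (simp add: mdot_coords spatial_dot_coords)

lemma spatial_dot_scaleR: "spatial_dot (a *\<^sub>R x) (b *\<^sub>R y) = a * b * spatial_dot x y"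
  by (simp add: spatial_dot_coords algebra_simps)

lemma mdot_scaleR: "mdot (a *\<^sub>R x) (b *\<^sub>R y) = a * b * mdot x y"
  by (simp add: mdot_coords algebra_simps)

lemma lower_scaleR: "lower (c *\<^sub>R x) = c *\<^sub>R lower x"
  by (simp add: vec4_eq_iff)

definition vec4 :: "real \<Rightarrow> real \<Rightarrow> real \<Rightarrow> real \<Rightarrow> real^4" where
  "vec4 a b c d = (\<chi> i. if i = 0 then a else if i = 1 then b else if i = 2 then c else d)"

lemma vec4_nth [simp]:
  "vec4 a b c d $ 0 = a" "vec4 a b c d $ 1 = b" "vec4 a b c d $ 2 = c" "vec4 a b c d $ 3 = d"
  by (simp_all add: vec4_def)

lemma lower_vec4: "lower (vec4 a b c d) = vec4 (-a) b c d"
  by (simp add: vec4_eq_iff)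

definition outer :: "real^4 \<Rightarrow> real^4 \<Rightarrow> real^4^4" where
  "outer x y = (\<chi> i j. x$i * y$j)"

lemma Tud_outer: "Tud u d = outer (lower u) (lower u) + mdot u u *\<^sub>R outer (lower d) (lower d)"
  by (simp add: Tud_def outer_def vec_eq_iff)

lemma outer_scaleR: "outer (a *\<^sub>R x) (b *\<^sub>R y) = (a * b) *\<^sub>R outer x y"
  by (simp add: outer_def vec_eq_iff)

lemma contr_Tud: "contr k (Tud u d) = mdot u k *\<^sub>R lower u + (mdot u u * mdot d k) *\<^sub>R lower d"
  by (simp add: vec_eq_iff contr_nth Tud_def mdot_coords algebra_simps)

lemma S_contr_zero: "T \<in> S k \<Longrightarrow> contr k T = 0"
  unfolding S_def by (auto simp: contr_Tud)

lemma observer_identity: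
  assumes "u$0 = 1" and "mdot u k = 0"
  shows "mdot k k = spatial_dot (k$0 *\<^sub>R u - k) (k$0 *\<^sub>R u - k) + (k$0)^2 * (1 - spatial_dot u u)"
proof -
  have orth: "u$1*k$1 + u$2*k$2 + u$3*k$3 = k$0"
    using assms by (simp add: mdot_coords)
  have "spatial_dot (k$0 *\<^sub>R u - k) (k$0 *\<^sub>R u - k)
      = (k$0)^2 * spatial_dot u u - 2 * k$0 * (u$1*k$1 + u$2*k$2 + u$3*k$3) + spatial_dot k k"
    by (simp add: spatial_dot_coords power2_eq_square algebra_simps)
  then show ?thesis
    unfolding orth by (simp add: mdot_coords spatial_dot_coords power2_eq_square algebra_simps)
qed

lemma observer_orthogonal_not_timelike:
  assumes "u$0 = 1" "spatial_dot u u \<le> 1" "mdot u k = 0"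
  shows "0 \<le> mdot k k"
  using observer_identity[OF assms(1,3)] assms(2) spatial_dot_self_nonneg[of "k$0 *\<^sub>R u - k"]
  by (simp add: add_nonneg_nonneg)

lemma observer_orthogonal_null:
  assumes "u$0 = 1" "spatial_dot u u \<le> 1" "mdot u k = 0" and "mdot k k = 0"
  shows "k = k$0 *\<^sub>R u"
proof -
  define w where "w = k$0 *\<^sub>R u - k"
  have "spatial_dot w w + (k$0)^2 * (1 - spatial_dot u u) = 0"
    using observer_identity[OF assms(1,3)] assms(4) by (simp add: w_def)
  moreover have "0 \<le> (k$0)^2 * (1 - spatial_dot u u)" using assms(2) by simp
  ultimately have "spatial_dot w w = 0" using spatial_dot_self_nonneg[of w] by linarith
  then have "w$1 = 0" "w$2 = 0" "w$3 = 0"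
    by (simp_all add: spatial_dot_coords add_nonneg_eq_0_iff)
  moreover have "w$0 = 0" using assms(1) by (simp add: w_def)
  ultimately show ?thesis by (simp add: w_def vec4_eq_iff)
qed

lemma S_timelike_empty: "timelike k \<Longrightarrow> S k = {}"
  unfolding S_def timelike_def using observer_orthogonal_not_timelike by fastforce

lemma null_time_component_nonzero:
  assumes "null k" "k \<noteq> 0" shows "k$0 \<noteq> 0"
proof
  assume k0: "k$0 = 0"
  then have "spatial_dot k k = 0" using assms(1) by (simp add: null_def mdot_coords spatial_dot_coords)
  then have "k$1 = 0" "k$2 = 0" "k$3 = 0"
    by (simp_all add: spatial_dot_coords add_nonneg_eq_0_iff)
  then show False using k0 assms(2) by (simp add: vec4_eq_iff)
qed

lemma spatial_unit_orthogonal_exists: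
  "\<exists>d. d$0 = 0 \<and> spatial_dot d d = 1 \<and> spatial_dot d k = 0"
proof (cases "k$1 = 0 \<and> k$2 = 0")
  case True
  then show ?thesis by (intro exI[of _ "vec4 0 1 0 0"]) (simp add: spatial_dot_coords)
next
  case False
  define r where "r = sqrt ((k$1)^2 + (k$2)^2)"
  have "(k$1)^2 + (k$2)^2 > 0" using False by (auto simp: sum_power2_gt_zero_iff)
  then have r: "r > 0" "r * r = k$1 * k$1 + k$2 * k$2"
    unfolding r_def by (auto simp: power2_eq_square)
  have "(-k$2/r) * (-k$2/r) + (k$1/r) * (k$1/r) = (k$1 * k$1 + k$2 * k$2) / (r * r)"
    by (simp add: divide_simps)
  also have "\<dots> = 1" using r(1) by (simp flip: r(2))
  finally have "(-k$2/r) * (-k$2/r) + (k$1/r) * (k$1/r) = 1" .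
  moreover have "(-k$2/r) * k$1 + (k$1/r) * k$2 = 0" by (simp add: field_simps)
  ultimately show ?thesis
    by (intro exI[of _ "vec4 0 (-k$2/r) (k$1/r) 0"]) (simp add: spatial_dot_coords)
qed

(* For null k the set S k is a single tensor: u = k / k0 is forced and d is irrelevant,
   because u is null; a suitable d exists by the previous lemma. *)
lemma null_S_singleton:
  assumes "null k" "k \<noteq> 0"
  shows "S k = {(1 / (k$0)^2) *\<^sub>R outer (lower k) (lower k)}"
proof -
  have k0: "k$0 \<noteq> 0" using null_time_component_nonzero[OF assms] .
  have tensor_of_observer: "Tud u d = (1 / (k$0)^2) *\<^sub>R outer (lower k) (lower k)"
    if "u$0 = 1" "spatial_dot u u \<le> 1" "mdot u k = 0" for u d
  proof -
    have "k = k$0 *\<^sub>R u"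
      using observer_orthogonal_null[OF that] assms(1) by (simp add: null_def)
    then have "(1 / k$0) *\<^sub>R k = (1 / k$0) *\<^sub>R (k$0 *\<^sub>R u)" by simp
    then have u: "u = (1 / k$0) *\<^sub>R k" using k0 by simp
    then have "mdot u u = 0" using assms(1) by (simp add: null_def mdot_scaleR)
    then show ?thesis using k0
      by (simp add: Tud_outer u lower_scaleR outer_scaleR power2_eq_square)
  qed
  obtain d where d: "d$0 = 0" "spatial_dot d d = 1" "spatial_dot d k = 0"
    using spatial_unit_orthogonal_exists by blast
  define u where "u = (1 / k$0) *\<^sub>R k"
  have member: "Tud u d \<in> S k" unfolding S_def
  proof (intro CollectI exI[of _ u, OF exI[of _ d]] conjI)
    have "spatial_dot k k = k$0 * k$0" using assms(1) by (simp add: null_def mdot_spatial_dot)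
    then show "spatial_dot u u \<le> 1" using k0 by (simp add: u_def spatial_dot_scaleR)
    show "mdot u k = 0" using assms(1) mdot_scaleR[of _ k 1 k] by (simp add: u_def null_def)
    show "spatial_dot d u = 0" using d spatial_dot_scaleR[of 1 d "1 / k$0" k] by (simp add: u_def)
    show "mdot d k = 0" using d by (simp add: mdot_spatial_dot)
  qed (use d k0 in \<open>simp_all add: u_def\<close>)
  have unique: "T = (1 / (k$0)^2) *\<^sub>R outer (lower k) (lower k)" if "T \<in> S k" for T
    using that tensor_of_observer unfolding S_def by blast
  show ?thesis
  proof (rule set_eqI)
    fix T show "T \<in> S k \<longleftrightarrow> T \<in> {(1 / (k$0)^2) *\<^sub>R outer (lower k) (lower k)}"
      using member unique[OF member] unique[of T] by auto
  qed
qed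

lemma span_S_null:
  assumes "null k" "k \<noteq> 0"
  shows "span (S k) = range (\<lambda>c::real. c *\<^sub>R outer (lower k) (lower k))"
proof -
  define X where "X = outer (lower k) (lower k)"
  have k0: "(k$0)^2 \<noteq> 0" using null_time_component_nonzero[OF assms] by simp
  have "range (\<lambda>c. c *\<^sub>R ((1 / (k$0)^2) *\<^sub>R X)) = range (\<lambda>c. c *\<^sub>R X)"
  proof (intro set_eqI iffI)
    fix T assume "T \<in> range (\<lambda>c. c *\<^sub>R ((1 / (k$0)^2) *\<^sub>R X))"
    then obtain c where "T = (c / (k$0)^2) *\<^sub>R X" by auto
    then show "T \<in> range (\<lambda>c. c *\<^sub>R X)" by blast
  next
    fix T assume "T \<in> range (\<lambda>c. c *\<^sub>R X)"
    then obtain c where "T = (c * (k$0)^2) *\<^sub>R ((1 / (k$0)^2) *\<^sub>R X)" using k0 by auto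
    then show "T \<in> range (\<lambda>c. c *\<^sub>R ((1 / (k$0)^2) *\<^sub>R X))" by blast
  qed
  then show ?thesis by (simp add: null_S_singleton[OF assms] span_singleton X_def)
qed

(* Part (iv), second half: l^mu k_mu k_nu is a multiple of k, hence null. *)
lemma contr_square_of_null_is_null:
  assumes "null k"
  shows "mdot (raise (contr l (c *\<^sub>R outer (lower k) (lower k))))
              (raise (contr l (c *\<^sub>R outer (lower k) (lower k)))) = 0"
proof -
  have "raise (contr l (c *\<^sub>R outer (lower k) (lower k))) = (c * mdot l k) *\<^sub>R k"
    by (simp add: vec4_eq_iff contr_nth outer_def mdot_coords algebra_simps)
  then show ?thesis using assms by (simp add: mdot_scaleR null_def)
qed

lemma symmetric_tensor_transpose: "symmetric_tensor T \<longleftrightarrow> transpose T = T"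
  by (auto simp: symmetric_tensor_def vec_eq_iff transpose_def)

lemma contr_matrix: "contr x T = transpose T *v x"
  by (simp add: contr_def vec_eq_iff matrix_vector_mult_def transpose_def mult.commute)

definition transverse :: "real^4 \<Rightarrow> (real^4^4) set" where
  "transverse k = {T. symmetric_tensor T \<and> contr k T = 0}"

lemma linear_contr: "linear (contr k)"
  by (rule linearI) (simp_all add: vec_eq_iff contr_nth algebra_simps)

lemma transverse_subspace: "subspace (transverse k)"
  unfolding subspace_def transverse_def symmetric_tensor_def
  by (simp add: linear_add[OF linear_contr] linear_scale[OF linear_contr] linear_0[OF linear_contr])

lemma S_subset_transverse: "S k \<subseteq> transverse k"
  unfolding transverse_def using S_contr_zero
  by (auto simp: S_def symmetric_tensor_def Tud_def mult.commute)

lemma span_S_subset_transverse: "span (S k) \<subseteq> transverse k"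
  by (rule span_minimal[OF S_subset_transverse transverse_subspace])

definition transform :: "real^4^4 \<Rightarrow> real^4^4 \<Rightarrow> real^4^4" where
  "transform m T = m ** T ** transpose m"

lemma transform_outer: "transform m (outer x y) = outer (m *v x) (m *v y)"
  by (simp add: transform_def outer_def vec_eq_iff matrix_matrix_mult_def matrix_vector_mult_def
      transpose_def sum_UNIV_4 algebra_simps)

lemma linear_transform: "linear (transform m)"
  by (rule linearI)
    (simp_all add: transform_def vec_eq_iff matrix_matrix_mult_def transpose_def sum_UNIV_4 algebra_simps)

definition spatial_reflection :: "real^4^4 \<Rightarrow> bool" where
  "spatial_reflection m \<longleftrightarrow> transpose m = m \<and> m ** m = mat 1 \<and> (\<forall>x. (m *v x)$0 = x$0)
     \<and> (\<forall>x y. spatial_dot (m *v x) (m *v y) = spatial_dot x y) \<and> (\<forall>x. lower (m *v x) = m *v lower x)"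

context
  fixes m :: "real^4^4"
  assumes refl: "spatial_reflection m"
begin

lemma reflection_symmetric: "transpose m = m"
  and reflection_involution: "m ** m = mat 1"
  and reflection_time: "(m *v x)$0 = x$0"
  and reflection_spatial_dot: "spatial_dot (m *v x) (m *v y) = spatial_dot x y"
  and reflection_lower: "lower (m *v x) = m *v lower x"
  using refl by (auto simp: spatial_reflection_def)

lemma reflection_twice: "m *v (m *v x) = x"
  by (simp add: matrix_vector_mul_assoc reflection_involution)

lemma reflection_mdot: "mdot (m *v x) (m *v y) = mdot x y"
  by (simp add: mdot_spatial_dot reflection_spatial_dot reflection_time)

lemma reflection_Tud: "Tud (m *v u) (m *v d) = transform m (Tud u d)"
  using linear_add[OF linear_transform] linear_scale[OF linear_transform]
  by (simp add: Tud_outer reflection_lower transform_outer reflection_mdot)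

lemma reflection_contr: "contr (m *v x) (transform m T) = m *v contr x T"
proof -
  have "transpose (transform m T) = m ** transpose T ** m"
    by (simp add: transform_def reflection_symmetric matrix_transpose_mul matrix_mul_assoc)
  then have "contr (m *v x) (transform m T) = (m ** transpose T ** (m ** m)) *v x"
    by (simp add: contr_matrix matrix_vector_mul_assoc matrix_mul_assoc)
  also have "\<dots> = m *v contr x T"
    by (simp add: reflection_involution contr_matrix flip: matrix_vector_mul_assoc)
  finally show ?thesis .
qed

lemma reflection_symmetric_tensor: "symmetric_tensor T \<Longrightarrow> symmetric_tensor (transform m T)"
  by (simp add: symmetric_tensor_transpose transform_def reflection_symmetric
      matrix_transpose_mul matrix_mul_assoc)

lemma transform_twice: "transform m (transform m T) = T"
proof -
  have "transform m (transform m T) = (m ** m) ** T ** (m ** m)"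
    by (simp add: transform_def reflection_symmetric matrix_mul_assoc)
  then show ?thesis by (simp add: reflection_involution)
qed

(* For an involution, an inclusion valid for all vectors upgrades to an equality. *)
lemma involution_image_eq:
  assumes "\<And>k. transform m ` F k \<subseteq> F (m *v k)"
  shows "F (m *v k) = transform m ` F k"
proof
  show "transform m ` F k \<subseteq> F (m *v k)" by (rule assms)
  have "transform m ` F (m *v k) \<subseteq> F (m *v (m *v k))" by (rule assms)
  then have "transform m ` transform m ` F (m *v k) \<subseteq> transform m ` F k"
    by (simp add: reflection_twice image_mono)
  then show "F (m *v k) \<subseteq> transform m ` F k" by (simp add: image_image transform_twice)
qed

lemma reflection_S: "S (m *v k) = transform m ` S k"
proof (rule involution_image_eq)
  fix k show "transform m ` S k \<subseteq> S (m *v k)"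
  proof
    fix T assume "T \<in> transform m ` S k"
    then obtain u d where u: "u $ 0 = 1" "spatial_dot u u \<le> 1"
        "d $ 0 = 0" "spatial_dot d d = 1" "spatial_dot d u = 0"
        "mdot u k = 0" "mdot d k = 0" and T: "T = transform m (Tud u d)"
      unfolding S_def by blast
    show "T \<in> S (m *v k)" unfolding S_def
      by (rule CollectI, rule exI[of _ "m *v u"], rule exI[of _ "m *v d"])
        (simp add: reflection_time reflection_spatial_dot reflection_mdot u T reflection_Tud)
  qed
qed

lemma reflection_transverse: "transverse (m *v k) = transform m ` transverse k"
proof (rule involution_image_eq)
  fix k show "transform m ` transverse k \<subseteq> transverse (m *v k)"
    by (auto simp: transverse_def reflection_symmetric_tensor reflection_contr)
qed

lemma reflection_span_S:
  "span (S k) = transverse k \<Longrightarrow> span (S (m *v k)) = transverse (m *v k)"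
  by (simp add: reflection_S reflection_transverse linear_span_image[OF linear_transform])

end

lemma inner_coords: "inner (x::real^4) y = x$0*y$0 + x$1*y$1 + x$2*y$2 + x$3*y$3"
  by (simp add: inner_vec_def sum_UNIV_4)

definition householder :: "real^4 \<Rightarrow> real^4^4" where
  "householder w = mat 1 - (2 / inner w w) *\<^sub>R outer w w"

lemma rank_one_update_apply: "(mat 1 - s *\<^sub>R outer w w) *v x = x - (s * inner w x) *\<^sub>R w"
  by (simp add: vec4_eq_iff matrix_vector_mult_def sum_UNIV_4 mat_def outer_def inner_coords
      algebra_simps)

lemma householder_apply: "householder w *v x = x - (2 / inner w w * inner w x) *\<^sub>R w"
  by (simp add: householder_def rank_one_update_apply)

lemma householder_spatial_reflection:
  assumes w0: "w$0 = 0" and w: "w \<noteq> 0"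
  shows "spatial_reflection (householder w)"
proof -
  let ?m = "householder w"
  define s where "s = 2 / inner w w"
  have sw: "s * inner w w = 2" using w by (simp add: s_def)
  have apply_m: "?m *v x = x - (s * inner w x) *\<^sub>R w" for x
    by (simp add: householder_apply s_def)
  have symmetric: "transpose ?m = ?m"
    by (simp add: householder_def tensor_eq_iff transpose_def mat_def outer_def mult.commute)
  have twice: "?m *v (?m *v x) = x" for x
  proof -
    have "inner w (?m *v x) = inner w x - (s * inner w w) * inner w x"
      by (simp add: apply_m inner_diff_right algebra_simps)
    then have "inner w (?m *v x) = - inner w x" by (simp add: sw)
    then show ?thesis by (simp add: apply_m[of "?m *v x"]) (simp add: apply_m)
  qed
  have involution: "?m ** ?m = mat 1"
    by (subst matrix_eq) (simp add: twice flip: matrix_vector_mul_assoc)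
  have time: "(?m *v x)$0 = x$0" for x by (simp add: apply_m w0)
  have isometry: "inner (?m *v x) (?m *v y) = inner x y" for x y
  proof -
    have "inner (?m *v x) (?m *v y)
        = inner x y - 2 * s * inner w x * inner w y + (s * inner w w) * s * inner w x * inner w y"
      by (simp add: apply_m inner_diff_left inner_diff_right inner_commute algebra_simps)
    then show ?thesis unfolding sw by simp
  qed
  have "spatial_dot x y = inner x y - x$0 * y$0" for x y
    by (simp add: spatial_dot_coords inner_coords)
  then have spatial: "spatial_dot (?m *v x) (?m *v y) = spatial_dot x y" for x y
    by (simp add: isometry time)
  have lower: "lower (?m *v x) = ?m *v lower x" for x
    by (simp add: apply_m vec4_eq_iff inner_coords w0 algebra_simps)
  show ?thesis
    unfolding spatial_reflection_def using symmetric involution time spatial lower by blast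
qed

(* Every spacelike k is the image of a canonical vector (k0,0,0,c), |k0| < c, under a
   spatial reflection (reflect the spatial part of k onto the third axis). *)
lemma spacelike_reflection_to_canonical:
  assumes "spacelike k"
  obtains m k0 c where "spatial_reflection m" "m *v vec4 k0 0 0 c = k" "\<bar>k0\<bar> < c"
proof -
  define c where "c = sqrt ((k$1)^2 + (k$2)^2 + (k$3)^2)"
  have c: "c^2 = (k$1)^2 + (k$2)^2 + (k$3)^2" "c \<ge> 0" unfolding c_def by auto
  have "(k$0)^2 < c^2" using assms c by (simp add: spacelike_def mdot_coords power2_eq_square)
  then have lt: "\<bar>k$0\<bar> < c" using c(2) by (simp add: power2_less_imp_less)
  define kc where "kc = vec4 (k$0) 0 0 c"
  show ?thesis
  proof (cases "kc = k")
    case True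
    have "spatial_reflection (mat 1)" by (simp add: spatial_reflection_def)
    then show ?thesis using that[of "mat 1"] lt True by (simp add: kc_def)
  next
    case False
    define w where "w = kc - k"
    have w0: "w$0 = 0" and w: "w \<noteq> 0" using False by (simp_all add: w_def kc_def)
    have "inner kc kc = inner k k" using c by (simp add: kc_def inner_coords power2_eq_square)
    then have wk: "inner w w = 2 * inner w kc"
      by (simp add: w_def inner_diff_left inner_diff_right inner_commute)
    then have "inner w kc \<noteq> 0" using w by (metis inner_eq_zero_iff mult_zero_right)
    then have "2 / inner w w * inner w kc = 1" by (simp add: wk)
    then have "householder w *v kc = kc - w" by (simp only: householder_apply scaleR_one)
    then have "householder w *v kc = k" by (simp add: w_def)
    then show ?thesis using that householder_spatial_reflection[OF w0 w] lt by (simp add: kc_def)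
  qed
qed

definition sym_outer :: "real^4 \<Rightarrow> real^4 \<Rightarrow> real^4^4" where
  "sym_outer x y = outer x y + outer y x"

(* The canonical spacelike vector c (a,0,0,1) with |a| < 1, written with rho = sqrt (1 - a^2).
   Members of S k: the null observers (1, rho x, rho y, a) for x^2 + y^2 = 1, and the
   observer (1,0,0,a) at rest in the (1,2)-plane. *)
context
  fixes a \<rho> c :: real
  assumes rho_pos: "\<rho> > 0" and rho_a: "\<rho> * \<rho> + a * a = 1"
begin

lemma canonical_null_member:
  assumes xy: "x * x + y * y = 1"
  shows "outer (vec4 (-1) (\<rho>*x) (\<rho>*y) a) (vec4 (-1) (\<rho>*x) (\<rho>*y) a) \<in> S (vec4 (a*c) 0 0 c)"
proof -
  let ?u = "vec4 1 (\<rho>*x) (\<rho>*y) a" and ?d = "vec4 0 (-y) x 0"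
  have "mdot ?u ?u = -1 + \<rho>*\<rho>*(x*x + y*y) + a*a" by (simp add: mdot_coords algebra_simps)
  then have null: "mdot ?u ?u = 0" using xy rho_a by simp
  have "Tud ?u ?d \<in> S (vec4 (a*c) 0 0 c)" unfolding S_def
  proof (intro CollectI exI[of _ ?u, OF exI[of _ ?d]] conjI)
    show "spatial_dot ?u ?u \<le> 1" using null by (simp add: mdot_spatial_dot)
    show "spatial_dot ?d ?d = 1" using xy by (simp add: spatial_dot_coords algebra_simps)
  qed (simp_all add: spatial_dot_coords mdot_coords algebra_simps)
  moreover have "Tud ?u ?d = outer (vec4 (-1) (\<rho>*x) (\<rho>*y) a) (vec4 (-1) (\<rho>*x) (\<rho>*y) a)"
    by (simp add: Tud_outer null lower_vec4)
  ultimately show ?thesis by simp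
qed

lemma canonical_massive_member:
  "outer (vec4 (-1) 0 0 a) (vec4 (-1) 0 0 a) - (\<rho>*\<rho>) *\<^sub>R outer (vec4 0 1 0 0) (vec4 0 1 0 0)
     \<in> S (vec4 (a*c) 0 0 c)"
proof -
  let ?u = "vec4 1 0 0 a" and ?d = "vec4 0 1 0 0"
  have norm: "mdot ?u ?u = - (\<rho>*\<rho>)" using rho_a by (simp add: mdot_coords)
  have "Tud ?u ?d \<in> S (vec4 (a*c) 0 0 c)" unfolding S_def
  proof (intro CollectI exI[of _ ?u, OF exI[of _ ?d]] conjI)
    show "spatial_dot ?u ?u \<le> 1" using rho_a rho_pos
      by (simp add: spatial_dot_coords) (smt (verit) mult_pos_pos)
  qed (simp_all add: spatial_dot_coords mdot_coords)
  moreover have "Tud ?u ?d = outer (vec4 (-1) 0 0 a) (vec4 (-1) 0 0 a)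
                               - (\<rho>*\<rho>) *\<^sub>R outer (vec4 0 1 0 0) (vec4 0 1 0 0)"
    by (simp add: Tud_outer norm lower_vec4)
  ultimately show ?thesis by simp
qed

(* Linear combinations of these members give a basis of the transverse space, built from
   p = (1,0,0,-a), e1 and e2. *)
lemma canonical_basis_in_span:
  defines "p \<equiv> vec4 1 0 0 (-a)" and "e1 \<equiv> vec4 0 1 0 0" and "e2 \<equiv> vec4 0 0 1 0"
  shows "outer p p \<in> span (S (vec4 (a*c) 0 0 c))" "outer e1 e1 \<in> span (S (vec4 (a*c) 0 0 c))"
    "outer e2 e2 \<in> span (S (vec4 (a*c) 0 0 c))" "sym_outer p e1 \<in> span (S (vec4 (a*c) 0 0 c))"
    "sym_outer p e2 \<in> span (S (vec4 (a*c) 0 0 c))" "sym_outer e1 e2 \<in> span (S (vec4 (a*c) 0 0 c))"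
proof -
  let ?V = "span (S (vec4 (a*c) 0 0 c))"
  define N where "N x y = outer (vec4 (-1) (\<rho>*x) (\<rho>*y) a) (vec4 (-1) (\<rho>*x) (\<rho>*y) a)" for x y
  define M where "M = outer (vec4 (-1) 0 0 a) (vec4 (-1) 0 0 a) - (\<rho>*\<rho>) *\<^sub>R outer e1 e1"
  have N: "N x y \<in> ?V" if "x * x + y * y = 1" for x y
    using canonical_null_member[OF that] by (simp add: N_def span_base)
  have M: "M \<in> ?V" using canonical_massive_member by (simp add: M_def e1_def span_base)
  have N_axes: "N 1 0 \<in> ?V" "N (-1) 0 \<in> ?V" "N 0 1 \<in> ?V" "N 0 (-1) \<in> ?V"
    "N (3/5) (4/5) \<in> ?V" "N (3/5) (-4/5) \<in> ?V"
    by (auto intro!: N)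
  note span_ops = span_add span_diff span_scale
  note coords = tensor_eq_iff all_4 outer_def sym_outer_def N_def M_def p_def e1_def e2_def
  have "outer p p = (1/4) *\<^sub>R (N 1 0 + N (-1) 0) + (1/2) *\<^sub>R M"
    by (simp add: coords)
  then show pp: "outer p p \<in> ?V" using N_axes M by (simp add: span_ops)
  have "outer e1 e1 = (1/(4*\<rho>*\<rho>)) *\<^sub>R (N 1 0 + N (-1) 0) - (1/(2*\<rho>*\<rho>)) *\<^sub>R M"
    using rho_pos by (simp add: coords field_simps)
  then show "outer e1 e1 \<in> ?V" using N_axes M by (simp add: span_ops)
  have "outer e2 e2 = (1/(2*\<rho>*\<rho>)) *\<^sub>R (N 0 1 + N 0 (-1)) - (1/(\<rho>*\<rho>)) *\<^sub>R outer p p"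
    using rho_pos by (simp add: coords field_simps)
  then show "outer e2 e2 \<in> ?V" using N_axes pp by (simp add: span_ops)
  have "sym_outer p e1 = (1/(2*\<rho>)) *\<^sub>R (N (-1) 0 - N 1 0)"
    using rho_pos by (simp add: coords field_simps)
  then show "sym_outer p e1 \<in> ?V" using N_axes by (simp add: span_ops)
  have "sym_outer p e2 = (1/(2*\<rho>)) *\<^sub>R (N 0 (-1) - N 0 1)"
    using rho_pos by (simp add: coords field_simps)
  then show pe2: "sym_outer p e2 \<in> ?V" using N_axes by (simp add: span_ops)
  have "sym_outer e1 e2
      = (25/(24*\<rho>*\<rho>)) *\<^sub>R (N (3/5) (4/5) - N (3/5) (-4/5) + (8*\<rho>/5) *\<^sub>R sym_outer p e2)"
    using rho_pos by (simp add: coords field_simps)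
  then show "sym_outer e1 e2 \<in> ?V" using N_axes pe2 by (simp add: span_ops)
qed

end

(* Every transverse tensor for the canonical vector expands in that basis: the row of index 3
   is -a times the row of index 0, and the rest is fixed by symmetry. *)
lemma canonical_transverse_decomposition:
  assumes c: "c \<noteq> 0" and T: "T \<in> transverse (vec4 (a*c) 0 0 c)"
  defines "p \<equiv> vec4 1 0 0 (-a)" and "e1 \<equiv> vec4 0 1 0 0" and "e2 \<equiv> vec4 0 0 1 0"
  shows "T = T$0$0 *\<^sub>R outer p p + T$0$1 *\<^sub>R sym_outer p e1 + T$0$2 *\<^sub>R sym_outer p e2
           + T$1$1 *\<^sub>R outer e1 e1 + T$1$2 *\<^sub>R sym_outer e1 e2 + T$2$2 *\<^sub>R outer e2 e2"
proof -
  have sym: "T$i$j = T$j$i" for i j using T by (simp add: transverse_def symmetric_tensor_def)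
  have row3: "T$3$n = -a * T$0$n" for n
  proof -
    have "c * (a * T$0$n + T$3$n) = 0"
      using T by (simp add: transverse_def vec_eq_iff contr_nth algebra_simps)
    then show ?thesis using c by simp
  qed
  have "T$3$0 = -a*T$0$0" "T$3$1 = -a*T$0$1" "T$3$2 = -a*T$0$2" "T$3$3 = a*a*T$0$0"
       "T$0$3 = -a*T$0$0" "T$1$3 = -a*T$0$1" "T$2$3 = -a*T$0$2"
       "T$1$0 = T$0$1" "T$2$0 = T$0$2" "T$2$1 = T$1$2"
    using row3 sym[of 0 3] sym[of 1 3] sym[of 2 3] sym[of 1 0] sym[of 2 0] sym[of 2 1] row3[of 3]
    by auto
  then show ?thesis
    by (simp add: tensor_eq_iff all_4 outer_def sym_outer_def p_def e1_def e2_def)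
qed

lemma canonical_span_S:
  assumes "\<bar>k0\<bar> < c"
  shows "span (S (vec4 k0 0 0 c)) = transverse (vec4 k0 0 0 c)"
proof
  show "span (S (vec4 k0 0 0 c)) \<subseteq> transverse (vec4 k0 0 0 c)" by (rule span_S_subset_transverse)
  have c: "c > 0" using assms by linarith
  define a where "a = k0 / c"
  have k0: "k0 = a * c" using c by (simp add: a_def)
  have "\<bar>a\<bar> < 1" using assms c by (simp add: a_def abs_divide)
  then have a2: "a * a < 1" by (simp add: abs_square_less_1 flip: power2_eq_square)
  define \<rho> where "\<rho> = sqrt (1 - a * a)"
  have \<rho>: "\<rho> > 0" "\<rho> * \<rho> + a * a = 1" using a2 by (simp_all add: \<rho>_def)
  show "transverse (vec4 k0 0 0 c) \<subseteq> span (S (vec4 k0 0 0 c))"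
  proof
    fix T assume "T \<in> transverse (vec4 k0 0 0 c)"
    then have T: "T \<in> transverse (vec4 (a*c) 0 0 c)" by (simp add: k0)
    have "c \<noteq> 0" using c by simp
    from canonical_transverse_decomposition[OF this T]
    show "T \<in> span (S (vec4 k0 0 0 c))" unfolding k0
      by (rule ssubst) (intro span_add span_scale canonical_basis_in_span[OF \<rho>])
  qed
qed

lemma spacelike_span_S:
  assumes "spacelike k"
  shows "span (S k) = transverse k"
proof -
  obtain m k0 c where m: "spatial_reflection m" "m *v vec4 k0 0 0 c = k" "\<bar>k0\<bar> < c"
    using spacelike_reflection_to_canonical[OF assms] .
  from reflection_span_S[OF m(1) canonical_span_S[OF m(3)]] show ?thesis
    unfolding m(2) .
qed

theorem mainTheorem11:
  fixes k :: "real^4"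
  assumes "k \<noteq> 0"
  shows "(\<forall>T\<in>S k. contr k T = 0)
       \<and> (timelike k \<longrightarrow> S k = {})
       \<and> (spacelike k \<longrightarrow> span (S k) = {T. symmetric_tensor T \<and> contr k T = 0})
       \<and> (null k \<longrightarrow>
            span (S k) = range (\<lambda>c::real. c *\<^sub>R (\<chi> mu nu. (lower k) $ mu * (lower k) $ nu))
          \<and> (\<forall>l T. null l \<longrightarrow> T \<in> span (S k) \<longrightarrow>
                 mdot (raise (contr l T)) (raise (contr l T)) \<le> 0))"
proof (intro conjI impI allI ballI)
  show "contr k T = 0" if "T \<in> S k" for T using S_contr_zero[OF that] .
  show "S k = {}" if "timelike k" using S_timelike_empty[OF that] .
  show "span (S k) = {T. symmetric_tensor T \<and> contr k T = 0}" if "spacelike k"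
    using spacelike_span_S[OF that] by (simp add: transverse_def)
  assume null: "null k"
  have square: "(\<chi> mu nu. (lower k) $ mu * (lower k) $ nu) = outer (lower k) (lower k)"
    by (simp add: outer_def)
  show "span (S k) = range (\<lambda>c::real. c *\<^sub>R (\<chi> mu nu. (lower k) $ mu * (lower k) $ nu))"
    unfolding square by (rule span_S_null[OF null assms])
  fix l T assume "null l" and "T \<in> span (S k)"
  then obtain c where "T = c *\<^sub>R outer (lower k) (lower k)"
    using span_S_null[OF null assms] by blast
  then show "mdot (raise (contr l T)) (raise (contr l T)) \<le> 0"
    using contr_square_of_null_is_null[OF null] by simp
qed

end
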